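(* Let $\Xi\subseteq\mathbb{R}^d$ be a Polish space with Borel $\sigma$-algebra, equipped with a norm $\|\cdot\|$, and let $\boldsymbol{\xi}_1,\boldsymbol{\xi}_2,\dots$ be independent $\Xi$-valued random variables, $\boldsymbol{\xi}_i$ having distribution $\mathbb{P}_i$. Let $\rho:\mathbb{R}_+\to\mathbb{R}_+$ with $\rho(0)=0$ satisfy $W(\mathbb{P}_i,\mathbb{P}_{i+k})\le\rho(k)$ for all $i\ge1$, $k\ge0$. Let $\mathcal{X}\subseteq\mathbb{R}^n$ be finite, $g:\mathbb{R}^n\times\mathbb{R}^d\to\mathbb{R}$ with $g(x,\cdot)$ measurable for every $x$, and $\epsilon\in(0,1]$. Let $\delta\in(0,1)$, $\alpha\in(0,\epsilon)$, $\theta\in(0,\epsilon-\alpha)$, and let $N$ be a positive integer with $$N\ge\frac{1}{2(\epsilon-\alpha-\theta)^2}\ln\left(\frac{|\mathcal{X}|}{\delta}\right).$$ Set $r_i:=\rho(N+1-i)/\theta$ for $i\in[N]$, $U_{r_i}(\boldsymbol{\xi}_i):=\{u\in\Xi:\|u-\boldsymbol{\xi}_i\|\le r_i\}$, $$\widehat v^r(x):=\frac1N\sum_{i=1}^N\mathbb{1}\{\exists\,u\in U_{r_i}(\boldsymbol{\xi}_i)\text{ with }g(x,u)>0\},\qquad \widehat{\mathcal{X}}^r_\alpha:=\{x\in\mathcal{X}:\widehat v^r(x)\le\alpha\},$$ and $\mathcal{X}^{N+1}_\epsilon:=\{x\in\mathcal{X}:\mathbb{P}(g(x,\boldsymbol{\xi}_{N+1})>0)\le\epsilon\}$.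 Then $\mathbb{P}\big(\widehat{\mathcal{X}}^r_\alpha\subseteq\mathcal{X}^{N+1}_\epsilon\big)\ge1-\delta$.
   Context: The 1-Wasserstein distance between probability measures $\mathbb{P},\mathbb{P}'$ on $\Xi$ is $W(\mathbb{P},\mathbb{P}'):=\inf_{\pi\in\Pi(\mathbb{P},\mathbb{P}')}\int_{\Xi\times\Xi}\|\xi-\xi'\|\,\pi(d\xi,d\xi')$, where $\Pi(\mathbb{P},\mathbb{P}')$ is the set of couplings with marginals $\mathbb{P},\mathbb{P}'$. $\mathbb{1}\{\cdot\}$ is the indicator function; $[N]=\{1,\dots,N\}$. *)

theory Defs
  imports "HOL-Probability.Probability"
begin

definition is_norm :: "('a::real_vector \<Rightarrow> real) \<Rightarrow> bool" where
  "is_norm nrm \<longleftrightarrow>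
     (\<forall>x. 0 \<le> nrm x) \<and> (\<forall>x. nrm x = 0 \<longleftrightarrow> x = 0) \<and>
     (\<forall>c x. nrm (c *\<^sub>R x) = \<bar>c\<bar> * nrm x) \<and>
     (\<forall>x y. nrm (x + y) \<le> nrm x + nrm y)"

definition polish_subset :: "'a::topological_space set \<Rightarrow> bool" where
  "polish_subset S \<longleftrightarrow>
     completely_metrizable_space (subtopology euclidean S) \<and>
     separable_space (subtopology euclidean S)"

definition couplings ::
  "'a::topological_space measure \<Rightarrow> 'a measure \<Rightarrow> ('a \<times> 'a) measure set" where
  "couplings P Q = {\<pi>. prob_space \<pi> \<and> sets \<pi> = sets (borel \<Otimes>\<^sub>M borel) \<and>
                        distr \<pi> borel fst = P \<and> distr \<pi> borel snd = Q}"

definition wasserstein1 ::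
  "('a::real_normed_vector \<Rightarrow> real) \<Rightarrow> 'a measure \<Rightarrow> 'a measure \<Rightarrow> ennreal" where
  "wasserstein1 nrm P Q =
     (INF \<pi>\<in>couplings P Q. \<integral>\<^sup>+ z. ennreal (nrm (fst z - snd z)) \<partial>\<pi>)"

end

theory Submission
  imports Defs
begin

text \<open>
  Fix a candidate x that is infeasible for the next sample, i.e. its violation set
  B = {u \<in> \<Xi>. g x u > 0} has probability > \<epsilon> under the law Q of \<xi>(N+1).
  By inner regularity B contains a compact K with Q K > \<epsilon>. Since
  W(P i, Q) \<le> \<rho>(N + 1 - i) = r i * \<theta>, Markov's inequality on a near-optimal coupling shows
  that \<xi> i lands in the closed (r i)-thickening of K with probability at least Q K - \<theta> > \<epsilon> - \<theta>.
  Whenever that happens, the robust indicator of sample i fires, so accepting x requires at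
  most N \<alpha> of N independent events of probability > \<epsilon> - \<theta> to occur, which by Hoeffding's
  inequality has probability at most exp(-2N(\<epsilon> - \<alpha> - \<theta>)^2). A union bound over the finite
  set of candidates and the choice of N finish the proof.
\<close>

lemma is_norm_minus_commute:
  assumes "is_norm nrm"
  shows "nrm (x - y) = nrm (y - x)"
proof -
  have "nrm (x - y) = nrm ((-1) *\<^sub>R (y - x))" by simp
  also have "\<dots> = \<bar>-1\<bar> * nrm (y - x)" using assms unfolding is_norm_def by blast
  also have "\<dots> = nrm (y - x)" by simp
  finally show ?thesis .
qed

lemma is_norm_sum_le:
  assumes "is_norm nrm" "finite S"
  shows "nrm (\<Sum>i\<in>S. f i) \<le> (\<Sum>i\<in>S. nrm (f i))"
  using assms(2)
proof induction
  case empty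
  have "nrm 0 = 0" using assms(1) unfolding is_norm_def by blast
  then show ?case by simp
next
  case (insert x F)
  then have "nrm (\<Sum>i\<in>insert x F. f i) \<le> nrm (f x) + nrm (\<Sum>i\<in>F. f i)"
    using assms(1) unfolding is_norm_def by simp
  with insert show ?case by simp
qed

lemma is_norm_le_norm:
  fixes nrm :: "'a::euclidean_space \<Rightarrow> real"
  assumes "is_norm nrm"
  shows "nrm x \<le> (\<Sum>b\<in>Basis. nrm b) * norm x"
proof -
  have "nrm x = nrm (\<Sum>b\<in>Basis. (x \<bullet> b) *\<^sub>R b)" by (simp add: euclidean_representation)
  also have "\<dots> \<le> (\<Sum>b\<in>Basis. nrm ((x \<bullet> b) *\<^sub>R b))"
    by (rule is_norm_sum_le[OF assms]) simp
  also have "\<dots> = (\<Sum>b\<in>Basis. \<bar>x \<bullet> b\<bar> * nrm b)"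
    using assms unfolding is_norm_def by simp
  also have "\<dots> \<le> (\<Sum>b\<in>Basis. norm x * nrm b)"
    using Basis_le_norm assms unfolding is_norm_def by (intro sum_mono mult_right_mono) auto
  finally show ?thesis by (simp add: sum_distrib_left mult.commute)
qed

lemma is_norm_diff_le:
  assumes "is_norm nrm"
  shows "\<bar>nrm x - nrm y\<bar> \<le> nrm (x - y)"
proof -
  have "nrm x \<le> nrm (x - y) + nrm y" "nrm y \<le> nrm (y - x) + nrm x"
    using assms unfolding is_norm_def by (metis diff_add_cancel)+
  then show ?thesis using is_norm_minus_commute[OF assms, of x y] by linarith
qed

lemma continuous_on_is_norm:
  fixes nrm :: "'a::euclidean_space \<Rightarrow> real"
  assumes "is_norm nrm"
  shows "continuous_on UNIV nrm"
proof -
  have "(\<Sum>b\<in>Basis. nrm b)-lipschitz_on UNIV nrm"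
  proof (rule lipschitz_onI)
    fix x y :: 'a
    have "dist (nrm x) (nrm y) \<le> nrm (x - y)"
      using is_norm_diff_le[OF assms] by (simp add: dist_real_def)
    also have "\<dots> \<le> (\<Sum>b\<in>Basis. nrm b) * dist x y"
      using is_norm_le_norm[OF assms] by (simp add: dist_norm)
    finally show "dist (nrm x) (nrm y) \<le> (\<Sum>b\<in>Basis. nrm b) * dist x y" .
  qed (use assms in \<open>auto simp: is_norm_def intro: sum_nonneg\<close>)
  then show ?thesis by (rule lipschitz_on_continuous_on)
qed

lemma borel_measurable_is_norm:
  fixes nrm :: "'a::euclidean_space \<Rightarrow> real"
  assumes "is_norm nrm"
  shows "nrm \<in> borel_measurable borel"
  using continuous_on_is_norm[OF assms] by (rule borel_measurable_continuous_onI)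

text \<open>The set U_r(\<xi>) of the robust indicator meets B exactly when \<xi> \<in> thickening nrm B r.\<close>
definition thickening :: "('a::real_vector \<Rightarrow> real) \<Rightarrow> 'a set \<Rightarrow> real \<Rightarrow> 'a set" where
  "thickening nrm K t = {v. \<exists>u\<in>K. nrm (u - v) \<le> t}"

lemma thickening_mono:
  assumes "K \<subseteq> L" "s \<le> t"
  shows "thickening nrm K s \<subseteq> thickening nrm L t"
  using assms unfolding thickening_def by force

lemma closed_thickening:
  fixes nrm :: "'a::euclidean_space \<Rightarrow> real"
  assumes nrm: "is_norm nrm" and "compact K"
  shows "closed (thickening nrm K t)"
proof -
  have "closed {w. nrm w \<le> t}"
    using continuous_on_is_norm[OF nrm] by (simp add: closed_Collect_le continuous_on_const)
  moreover have "thickening nrm K t = (\<Union>w\<in>{w. nrm w \<le> t}. \<Union>u\<in>K. {w + u})"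
    unfolding thickening_def
  proof safe
    fix v u assume "u \<in> K" "nrm (u - v) \<le> t"
    then show "v \<in> (\<Union>w\<in>{w. nrm w \<le> t}. \<Union>u\<in>K. {w + u})"
      using is_norm_minus_commute[OF nrm, of u v] by (auto intro!: bexI[of _ "v - u"] bexI[of _ u])
  next
    fix w u assume "nrm w \<le> t" "u \<in> K"
    then show "\<exists>u'\<in>K. nrm (u' - (w + u)) \<le> t"
      using is_norm_minus_commute[OF nrm, of u "w + u"] by (auto intro!: bexI[of _ u])
  qed
  ultimately show ?thesis using closed_compact_sums[OF _ \<open>compact K\<close>] by simp
qed

lemma INT_thickening:
  fixes nrm :: "'a::euclidean_space \<Rightarrow> real"
  assumes nrm: "is_norm nrm" and K: "compact K"
  shows "(\<Inter>n. thickening nrm K (t + 1 / Suc n)) = thickening nrm K t"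
proof
  show "thickening nrm K t \<subseteq> (\<Inter>n. thickening nrm K (t + 1 / Suc n))"
    by (intro INT_greatest thickening_mono) auto
next
  show "(\<Inter>n. thickening nrm K (t + 1 / Suc n)) \<subseteq> thickening nrm K t"
  proof
    fix v assume v: "v \<in> (\<Inter>n. thickening nrm K (t + 1 / Suc n))"
    then have "K \<noteq> {}" unfolding thickening_def by auto
    moreover have "continuous_on K (\<lambda>u. nrm (u - v))"
      by (intro continuous_on_compose2[OF continuous_on_is_norm[OF nrm]] continuous_intros) auto
    ultimately obtain u0 where u0: "u0 \<in> K" and min: "\<And>u. u \<in> K \<Longrightarrow> nrm (u0 - v) \<le> nrm (u - v)"
      using continuous_attains_inf[OF K] by blast
    have le: "nrm (u0 - v) \<le> t + 1 / Suc n" for n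
    proof -
      obtain u where "u \<in> K" "nrm (u - v) \<le> t + 1 / Suc n"
        using v unfolding thickening_def by blast
      then show ?thesis using min[of u] by linarith
    qed
    have "nrm (u0 - v) \<le> t"
    proof (rule ccontr)
      assume "\<not> nrm (u0 - v) \<le> t"
      then have "nrm (u0 - v) - t > 0" by simp
      then obtain n where "1 / real (Suc n) < nrm (u0 - v) - t" by (rule nat_approx_posE)
      then show False using le[of n] by linarith
    qed
    then show "v \<in> thickening nrm K t" using u0 unfolding thickening_def by blast
  qed
qed

lemma measure_le_thickening_coupling:
  fixes nrm :: "'a::euclidean_space \<Rightarrow> real"
  assumes nrm: "is_norm nrm" and K: "compact K" and \<pi>: "\<pi> \<in> couplings P Q"
    and cost: "(\<integral>\<^sup>+ z. ennreal (nrm (fst z - snd z)) \<partial>\<pi>) \<le> ennreal b"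
    and "0 \<le> b" and c: "0 < c"
  shows "measure Q K \<le> measure P (thickening nrm K c) + b / c"
proof -
  interpret \<pi>: prob_space \<pi> using \<pi> unfolding couplings_def by blast
  have sets_\<pi>: "sets \<pi> = sets (borel \<Otimes>\<^sub>M borel)" and P: "distr \<pi> borel fst = P"
    and Q: "distr \<pi> borel snd = Q"
    using \<pi> unfolding couplings_def by auto
  have fst_m [measurable]: "fst \<in> borel_measurable \<pi>" and snd_m [measurable]: "snd \<in> borel_measurable \<pi>"
    using measurable_cong_sets[OF sets_\<pi> refl] by auto
  have [measurable]: "nrm \<in> borel_measurable borel" by (rule borel_measurable_is_norm[OF nrm])
  have K_m [measurable]: "K \<in> sets borel" and T_m [measurable]: "thickening nrm K c \<in> sets borel"
    using K closed_thickening[OF nrm K] by (simp_all add: compact_imp_closed)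
  define far where "far = {z\<in>space \<pi>. c \<le> nrm (fst z - snd z)}"
  have [measurable]: "far \<in> sets \<pi>" unfolding far_def by measurable
  have P_thickening: "measure P (thickening nrm K c) = measure \<pi> (fst -` thickening nrm K c \<inter> space \<pi>)"
    using measure_distr[OF fst_m T_m] unfolding P .
  have "measure Q K = measure \<pi> (snd -` K \<inter> space \<pi>)"
    using measure_distr[OF snd_m K_m] unfolding Q .
  also have "\<dots> \<le> measure \<pi> ((fst -` thickening nrm K c \<inter> space \<pi>) \<union> far)"
  proof (intro \<pi>.finite_measure_mono)
    show "snd -` K \<inter> space \<pi> \<subseteq> (fst -` thickening nrm K c \<inter> space \<pi>) \<union> far"
      unfolding far_def thickening_def by (force simp: not_le is_norm_minus_commute[OF nrm])
  qed auto
  also have "\<dots> \<le> measure \<pi> (fst -` thickening nrm K c \<inter> space \<pi>) + measure \<pi> far"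
    by (intro measure_Un_le) auto
  finally have "measure Q K \<le> measure P (thickening nrm K c) + measure \<pi> far"
    unfolding P_thickening .
  moreover have "measure \<pi> far \<le> b / c"
  proof -
    have "ennreal (c * measure \<pi> far) = ennreal c * emeasure \<pi> far"
      using c by (simp add: \<pi>.emeasure_eq_measure ennreal_mult)
    also have "\<dots> = (\<integral>\<^sup>+ z. ennreal c * indicator far z \<partial>\<pi>)"
      by (simp add: nn_integral_cmult_indicator)
    also have "\<dots> \<le> (\<integral>\<^sup>+ z. ennreal (nrm (fst z - snd z)) \<partial>\<pi>)"
      by (intro nn_integral_mono) (auto simp: far_def indicator_def intro!: ennreal_leI)
    also have "\<dots> \<le> ennreal b" by (rule cost)
    finally have "c * measure \<pi> far \<le> b" using \<open>0 \<le> b\<close> by simp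
    then show ?thesis using c by (simp add: field_simps)
  qed
  ultimately show ?thesis by simp
qed

lemma measure_le_thickening_wasserstein_approx:
  fixes nrm :: "'a::euclidean_space \<Rightarrow> real"
  assumes nrm: "is_norm nrm" and K: "compact K"
    and W: "wasserstein1 nrm P Q \<le> ennreal (r * \<theta>)"
    and "0 \<le> r" "0 \<le> \<theta>" "0 < s"
  shows "measure Q K \<le> measure P (thickening nrm K (r + s)) + \<theta> + s"
proof -
  have "wasserstein1 nrm P Q < ennreal (r * \<theta> + s * s)"
    using W assms(4-6) by (auto intro: le_less_trans intro!: ennreal_lessI add_nonneg_pos)
  then obtain \<pi> where \<pi>: "\<pi> \<in> couplings P Q"
    and cost: "(\<integral>\<^sup>+ z. ennreal (nrm (fst z - snd z)) \<partial>\<pi>) < ennreal (r * \<theta> + s * s)"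
    unfolding wasserstein1_def by (auto simp: INF_less_iff)
  have "measure Q K \<le> measure P (thickening nrm K (r + s)) + (r * \<theta> + s * s) / (r + s)"
    using assms(4-6) by (intro measure_le_thickening_coupling[OF nrm K \<pi> less_imp_le[OF cost]]) auto
  also have "(r * \<theta> + s * s) / (r + s) \<le> \<theta> + s"
    using assms(4-6) by (simp add: divide_le_eq algebra_simps)
  finally show ?thesis by simp
qed

lemma measure_le_thickening_wasserstein:
  fixes nrm :: "'a::euclidean_space \<Rightarrow> real"
  assumes nrm: "is_norm nrm" and K: "compact K"
    and P: "prob_space P" "sets P = sets borel"
    and W: "wasserstein1 nrm P Q \<le> ennreal (r * \<theta>)"
    and "0 \<le> r" "0 \<le> \<theta>"
  shows "measure Q K - \<theta> \<le> measure P (thickening nrm K r)"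
proof -
  interpret P: prob_space P by (rule P(1))
  define A where "A n = thickening nrm K (r + 1 / Suc n)" for n
  have "range A \<subseteq> sets P" unfolding A_def using closed_thickening[OF nrm K] P(2) by auto
  moreover have "decseq A"
  proof (rule decseq_SucI)
    fix n
    have "1 / real (Suc (Suc n)) \<le> 1 / real (Suc n)" by (intro divide_left_mono) auto
    then show "A (Suc n) \<subseteq> A n" unfolding A_def by (intro thickening_mono) simp_all
  qed
  ultimately have "(\<lambda>n. measure P (A n)) \<longlonglongrightarrow> measure P (\<Inter>n. A n)"
    by (rule P.finite_Lim_measure_decseq)
  then have "(\<lambda>n. measure P (A n)) \<longlonglongrightarrow> measure P (thickening nrm K r)"
    unfolding A_def INT_thickening[OF nrm K] .
  moreover have "(\<lambda>n. 1 / real (Suc n)) \<longlonglongrightarrow> 0"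
    using LIMSEQ_inverse_real_of_nat by (simp add: inverse_eq_divide)
  ultimately have "(\<lambda>n. measure P (A n) + \<theta> + 1 / Suc n) \<longlonglongrightarrow> measure P (thickening nrm K r) + \<theta> + 0"
    by (intro tendsto_add tendsto_const)
  moreover have "measure Q K \<le> measure P (A n) + \<theta> + 1 / Suc n" for n
    unfolding A_def using assms(6,7)
    by (intro measure_le_thickening_wasserstein_approx[OF nrm K W]) simp_all
  ultimately have "measure Q K \<le> measure P (thickening nrm K r) + \<theta> + 0"
    by (intro LIMSEQ_le_const) blast+
  then show ?thesis by simp
qed

lemma compact_subset_measure_gt:
  fixes Q :: "'a::{second_countable_topology, complete_space} measure"
  assumes "sets Q = sets borel" "emeasure Q (space Q) \<noteq> \<infinity>"
    and "B \<in> sets borel" "\<epsilon> < measure Q B"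
  shows "\<exists>K \<subseteq> B. compact K \<and> \<epsilon> < measure Q K"
proof (cases "\<epsilon> < 0")
  case False
  interpret Q: finite_measure Q using assms(2) by (rule finite_measureI)
  have "ennreal \<epsilon> < emeasure Q B"
    using False assms(4) by (auto simp: Q.emeasure_eq_measure intro!: ennreal_lessI)
  then obtain K where "K \<subseteq> B" "compact K" "ennreal \<epsilon> < emeasure Q K"
    unfolding inner_regular[OF assms(1-3)] by (auto simp: less_SUP_iff)
  then show ?thesis using False by (auto simp: Q.emeasure_eq_measure ennreal_less_iff)
qed auto

lemma (in prob_space) prob_indicator_count_le:
  fixes \<xi> :: "'i \<Rightarrow> 'a \<Rightarrow> 'b::topological_space" and p a :: real
  assumes I: "finite I" "I \<noteq> {}" and \<xi>_indep: "indep_vars (\<lambda>_. borel) \<xi> I"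
    and T: "\<And>i. i \<in> I \<Longrightarrow> T i \<in> sets borel"
    and p: "\<And>i. i \<in> I \<Longrightarrow> p \<le> prob (\<xi> i -` T i \<inter> space M)" and "a \<le> p"
  shows "prob {\<omega>\<in>space M. (\<Sum>i\<in>I. indicator (T i) (\<xi> i \<omega>)) \<le> card I * a}
           \<le> exp (- 2 * real (card I) * (p - a)\<^sup>2)"
proof -
  define Y where "Y i \<omega> = (indicator (T i) (\<xi> i \<omega>) :: real)" for i \<omega>
  define \<mu> where "\<mu> = (\<Sum>i\<in>I. expectation (Y i))"
  interpret Hoeffding_ineq M I Y "\<lambda>_. 0" "\<lambda>_. 1" \<mu>
  proof unfold_locales
    show "indep_vars (\<lambda>_. borel) Y I"
      unfolding Y_def by (rule indep_vars_compose2[OF \<xi>_indep]) (use T in auto)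
  qed (auto simp: \<mu>_def I Y_def indicator_def intro!: AE_I2)
  have "expectation (Y i) = prob (\<xi> i -` T i \<inter> space M)" if "i \<in> I" for i
  proof -
    have "\<xi> i \<in> borel_measurable M" using \<xi>_indep that unfolding indep_vars_def by blast
    then have "\<xi> i -` T i \<inter> space M \<in> events" using T[OF that] by measurable
    moreover have "expectation (Y i) = expectation (indicator (\<xi> i -` T i \<inter> space M))"
      by (intro Bochner_Integration.integral_cong) (auto simp: Y_def indicator_def)
    ultimately show ?thesis by simp
  qed
  then have "card I * p \<le> \<mu>"
    using sum_mono[of I "\<lambda>_. p"] p unfolding \<mu>_def by simp
  define t where "t = \<mu> - card I * a"
  have t: "card I * (p - a) \<le> t" "0 \<le> card I * (p - a)"
    using \<open>card I * p \<le> \<mu>\<close> \<open>a \<le> p\<close> unfolding t_def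
    by (auto simp: right_diff_distrib intro: mult_left_mono)
  have "prob {\<omega>\<in>space M. (\<Sum>i\<in>I. Y i \<omega>) \<le> \<mu> - t} \<le> exp (- 2 * t\<^sup>2 / (\<Sum>i\<in>I. (1 - 0)\<^sup>2))"
    using t I by (intro Hoeffding_ineq_le) auto
  also have "\<dots> \<le> exp (- 2 * real (card I) * (p - a)\<^sup>2)"
  proof -
    have n: "0 < real (card I)" using I by (simp add: card_gt_0_iff)
    have "(card I * (p - a))\<^sup>2 \<le> t\<^sup>2" using t by (intro power_mono) auto
    then have "card I * (p - a)\<^sup>2 * card I \<le> t\<^sup>2" by (simp add: power_mult_distrib power2_eq_square mult_ac)
    then have "card I * (p - a)\<^sup>2 \<le> t\<^sup>2 / card I" using n by (simp add: le_divide_eq)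
    moreover have "- 2 * t\<^sup>2 / card I = - 2 * (t\<^sup>2 / card I)" by simp
    ultimately show ?thesis by simp
  qed
  finally show ?thesis unfolding Y_def t_def by simp
qed

lemma (in prob_space) prob_thickening_count_le:
  fixes nrm :: "'b::euclidean_space \<Rightarrow> real" and \<xi> :: "'i \<Rightarrow> 'a \<Rightarrow> 'b"
    and r :: "'i \<Rightarrow> real" and \<epsilon> \<theta> \<alpha> :: real
  assumes nrm: "is_norm nrm"
    and Q: "prob_space Q" "sets Q = sets borel"
    and B: "B \<in> sets borel" "\<epsilon> < measure Q B"
    and I: "finite I" "I \<noteq> {}" and indep: "indep_vars (\<lambda>_. borel) \<xi> I"
    and W: "\<And>i. i \<in> I \<Longrightarrow> wasserstein1 nrm (distr M borel (\<xi> i)) Q \<le> ennreal (r i * \<theta>)"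
    and r: "\<And>i. i \<in> I \<Longrightarrow> 0 \<le> r i" and "0 \<le> \<theta>" and "\<alpha> \<le> \<epsilon> - \<theta>"
  shows "\<exists>E\<in>sets M. prob E \<le> exp (- 2 * real (card I) * (\<epsilon> - \<theta> - \<alpha>)\<^sup>2) \<and>
           {\<omega>\<in>space M. (\<Sum>i\<in>I. indicator (thickening nrm B (r i)) (\<xi> i \<omega>)) \<le> card I * \<alpha>} \<subseteq> E"
proof -
  obtain K where K: "K \<subseteq> B" "compact K" "\<epsilon> < measure Q K"
    using compact_subset_measure_gt[OF Q(2) _ B] prob_space.emeasure_space_1[OF Q(1)] by auto
  have \<xi>_m: "\<xi> i \<in> borel_measurable M" if "i \<in> I" for i
    using indep that unfolding indep_vars_def by blast
  have T_m: "thickening nrm K (r i) \<in> sets borel" for i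
    using closed_thickening[OF nrm K(2)] by simp
  have "(\<lambda>\<omega>. indicator (thickening nrm K (r i)) (\<xi> i \<omega>) :: real) \<in> borel_measurable M" if "i \<in> I" for i
    using measurable_compose[OF \<xi>_m[OF that] borel_measurable_indicator[OF T_m]] .
  then have count_m:
    "(\<lambda>\<omega>. \<Sum>i\<in>I. indicator (thickening nrm K (r i)) (\<xi> i \<omega>) :: real) \<in> borel_measurable M"
    by (rule borel_measurable_sum)
  define E where "E = {\<omega>\<in>space M. (\<Sum>i\<in>I. indicator (thickening nrm K (r i)) (\<xi> i \<omega>)) \<le> card I * \<alpha>}"
  have "E \<in> sets M" unfolding E_def by (rule borel_measurable_le[OF count_m borel_measurable_const])
  moreover have "prob E \<le> exp (- 2 * real (card I) * (\<epsilon> - \<theta> - \<alpha>)\<^sup>2)"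
    unfolding E_def
  proof (rule prob_indicator_count_le[OF I indep T_m])
    fix i assume i: "i \<in> I"
    have "\<epsilon> - \<theta> \<le> measure Q K - \<theta>" using K(3) by simp
    also have "\<dots> \<le> measure (distr M borel (\<xi> i)) (thickening nrm K (r i))"
      using r[OF i] \<open>0 \<le> \<theta>\<close>
      by (intro measure_le_thickening_wasserstein[OF nrm K(2) prob_space_distr[OF \<xi>_m[OF i]] _ W[OF i]])
        auto
    also have "\<dots> = prob (\<xi> i -` thickening nrm K (r i) \<inter> space M)"
      using \<xi>_m[OF i] T_m by (rule measure_distr)
    finally show "\<epsilon> - \<theta> \<le> prob (\<xi> i -` thickening nrm K (r i) \<inter> space M)" .
  qed fact
  moreover have "{\<omega>\<in>space M. (\<Sum>i\<in>I. indicator (thickening nrm B (r i)) (\<xi> i \<omega>)) \<le> card I * \<alpha>} \<subseteq> E"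
  proof -
    have "(\<Sum>i\<in>I. indicator (thickening nrm K (r i)) (\<xi> i \<omega>))
            \<le> (\<Sum>i\<in>I. indicator (thickening nrm B (r i)) (\<xi> i \<omega>) :: real)" for \<omega>
      using thickening_mono[OF K(1) order_refl] by (intro sum_mono) (auto simp: indicator_def)
    then show ?thesis unfolding E_def using order_trans by fastforce
  qed
  ultimately show ?thesis by blast
qed

lemma (in prob_space) prob_cover_UN_le:
  fixes b :: real
  assumes "finite S" and cover: "\<And>x. x \<in> S \<Longrightarrow> \<exists>E\<in>sets M. prob E \<le> b \<and> A x \<subseteq> E"
  shows "\<exists>E\<in>sets M. prob E \<le> card S * b \<and> (\<Union>x\<in>S. A x) \<subseteq> E"
proof -
  obtain E where E: "\<forall>x\<in>S. E x \<in> sets M \<and> prob (E x) \<le> b \<and> A x \<subseteq> E x"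
    using bchoice[of S "\<lambda>x E. E \<in> sets M \<and> prob E \<le> b \<and> A x \<subseteq> E"] cover by blast
  have "prob (\<Union>x\<in>S. E x) \<le> (\<Sum>x\<in>S. prob (E x))"
    using \<open>finite S\<close> E by (intro finite_measure_subadditive_finite) auto
  also have "\<dots> \<le> card S * b"
    using sum_mono[of S "\<lambda>x. prob (E x)" "\<lambda>_. b"] E by simp
  moreover have "(\<Union>x\<in>S. E x) \<in> sets M" "(\<Union>x\<in>S. A x) \<subseteq> (\<Union>x\<in>S. E x)"
    using \<open>finite S\<close> E by auto
  ultimately show ?thesis by (meson order_trans)
qed

lemma mult_exp_le_of_ln_div_le:
  fixes m \<delta> c N :: real
  assumes "0 \<le> m" "0 < \<delta>" "0 < c" "1 / (2 * c\<^sup>2) * ln (m / \<delta>) \<le> N"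
  shows "m * exp (- 2 * N * c\<^sup>2) \<le> \<delta>"
proof (cases "m = 0")
  case False
  have "ln (m / \<delta>) = 2 * c\<^sup>2 * (1 / (2 * c\<^sup>2) * ln (m / \<delta>))" using assms(3) by simp
  also have "\<dots> \<le> 2 * c\<^sup>2 * N" using assms(4) by (intro mult_left_mono) auto
  finally have "ln (m / \<delta>) \<le> 2 * N * c\<^sup>2" by (simp add: mult_ac)
  then have "m / \<delta> \<le> exp (2 * N * c\<^sup>2)"
    using False assms(1,2) by (metis exp_le_cancel_iff exp_ln divide_pos_pos less_eq_real_def)
  then have "m \<le> \<delta> * exp (2 * N * c\<^sup>2)" using assms(2) by (simp add: divide_le_eq mult.commute)
  then have "m * exp (- 2 * N * c\<^sup>2) \<le> \<delta> * exp (2 * N * c\<^sup>2) * exp (- 2 * N * c\<^sup>2)"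
    by (intro mult_right_mono) auto
  then show ?thesis by (simp add: mult.assoc flip: exp_add)
qed (use assms in simp)

lemma polish_subset_imp_borel:
  fixes \<Xi> :: "'a::metric_space set"
  assumes "polish_subset \<Xi>"
  shows "\<Xi> \<in> sets borel"
proof -
  have "gdelta_in euclidean \<Xi>"
    using assms unfolding polish_subset_def
    by (intro completely_metrizable_space_imp_gdelta_in metrizable_space_euclidean) auto
  then obtain C :: "nat \<Rightarrow> 'a set" where C: "\<And>n. openin euclidean (C n)" "\<Inter>(range C) = \<Xi>"
    unfolding gdelta_in_descending by blast
  have "(\<Inter>n. C n) \<in> sets borel" using C(1) by (intro sets.countable_INT'') auto
  then show ?thesis using C(2) by simp
qed

lemma (in prob_space) prob_robust_accept_le:
  fixes nrm :: "'b::euclidean_space \<Rightarrow> real" and \<xi> :: "nat \<Rightarrow> 'a \<Rightarrow> 'b" and h :: "'b \<Rightarrow> real"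
    and \<rho> :: "real \<Rightarrow> real" and \<epsilon> \<theta> \<alpha> :: real
  assumes nrm: "is_norm nrm" and \<Xi>: "\<Xi> \<in> sets borel" and h: "h \<in> borel_measurable borel"
    and \<xi>_m: "\<xi> (N + 1) \<in> borel_measurable M" and \<xi>_\<Xi>: "\<And>\<omega>. \<omega> \<in> space M \<Longrightarrow> \<xi> (N + 1) \<omega> \<in> \<Xi>"
    and indep: "indep_vars (\<lambda>_. borel) \<xi> {1..N}" and "0 < N"
    and W: "\<And>i. i \<in> {1..N} \<Longrightarrow>
      wasserstein1 nrm (distr M borel (\<xi> i)) (distr M borel (\<xi> (N + 1))) \<le> ennreal (\<rho> (real (N + 1 - i)))"
    and \<rho>: "\<And>i. i \<in> {1..N} \<Longrightarrow> 0 \<le> \<rho> (real (N + 1 - i))"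
    and "0 < \<theta>" "\<alpha> \<le> \<epsilon> - \<theta>"
    and infeasible: "\<epsilon> < prob {\<omega>\<in>space M. 0 < h (\<xi> (N + 1) \<omega>)}"
  shows "\<exists>E\<in>sets M. prob E \<le> exp (- 2 * real N * (\<epsilon> - \<alpha> - \<theta>)\<^sup>2) \<and>
           {\<omega>\<in>space M. (\<Sum>i = 1..N.
              (if \<exists>u \<in> \<Xi>. nrm (u - \<xi> i \<omega>) \<le> \<rho> (real (N + 1 - i)) / \<theta> \<and> h u > 0
               then 1 else 0)) / real N \<le> \<alpha>} \<subseteq> E"
proof -
  define Q where "Q = distr M borel (\<xi> (N + 1))"
  define B where "B = \<Xi> \<inter> (h -` {0<..} \<inter> space borel)"
  define r where "r i = \<rho> (real (N + 1 - i)) / \<theta>" for i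
  have B_m: "B \<in> sets borel" unfolding B_def using \<Xi> measurable_sets[OF h] by auto
  have "measure Q B = prob (\<xi> (N + 1) -` B \<inter> space M)"
    unfolding Q_def using \<xi>_m B_m by (rule measure_distr)
  also have "\<xi> (N + 1) -` B \<inter> space M = {\<omega>\<in>space M. 0 < h (\<xi> (N + 1) \<omega>)}"
    unfolding B_def using \<xi>_\<Xi> by auto
  finally have QB: "\<epsilon> < measure Q B" using infeasible by simp
  have W': "wasserstein1 nrm (distr M borel (\<xi> i)) Q \<le> ennreal (r i * \<theta>)" if "i \<in> {1..N}" for i
    using W[OF that] \<open>0 < \<theta>\<close> unfolding Q_def r_def by simp
  have r: "0 \<le> r i" if "i \<in> {1..N}" for i
    using \<rho>[OF that] \<open>0 < \<theta>\<close> unfolding r_def by simp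
  have Q: "prob_space Q" "sets Q = sets borel"
    unfolding Q_def using prob_space_distr[OF \<xi>_m] by simp_all
  have "{1..N} \<noteq> {}" using \<open>0 < N\<close> by simp
  from prob_thickening_count_le[OF nrm Q B_m QB finite_atLeastAtMost this indep W' r]
  obtain E where E: "E \<in> sets M" "prob E \<le> exp (- 2 * real N * (\<epsilon> - \<alpha> - \<theta>)\<^sup>2)"
    and count: "{\<omega>\<in>space M. (\<Sum>i\<in>{1..N}. indicator (thickening nrm B (r i)) (\<xi> i \<omega>)) \<le> N * \<alpha>} \<subseteq> E"
    using \<open>0 < \<theta>\<close> \<open>\<alpha> \<le> \<epsilon> - \<theta>\<close> by (auto simp: diff_diff_eq add.commute)
  have "(\<Sum>i = 1..N. (if \<exists>u \<in> \<Xi>. nrm (u - \<xi> i \<omega>) \<le> \<rho> (real (N + 1 - i)) / \<theta> \<and> h u > 0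
          then 1 else 0)) = (\<Sum>i\<in>{1..N}. indicator (thickening nrm B (r i)) (\<xi> i \<omega>) :: real)" for \<omega>
    unfolding r_def by (intro sum.cong refl) (auto simp: B_def thickening_def indicator_def)
  then have "{\<omega>\<in>space M. (\<Sum>i = 1..N.
              (if \<exists>u \<in> \<Xi>. nrm (u - \<xi> i \<omega>) \<le> \<rho> (real (N + 1 - i)) / \<theta> \<and> h u > 0
               then 1 else 0)) / real N \<le> \<alpha>} \<subseteq> E"
    using count \<open>0 < N\<close> by (simp add: divide_le_eq mult.commute)
  then show ?thesis using E by blast
qed

theorem corollary1:
  fixes M :: "'w measure"
    and \<Xi> :: "(real ^ 'd) set"
    and nrm :: "real ^ 'd \<Rightarrow> real"
    and \<xi> :: "nat \<Rightarrow> 'w \<Rightarrow> real ^ 'd"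
    and \<rho> :: "real \<Rightarrow> real"
    and \<X> :: "(real ^ 'n) set"
    and g :: "real ^ 'n \<Rightarrow> real ^ 'd \<Rightarrow> real"
    and \<epsilon> \<delta> \<alpha> \<theta> :: real
    and N :: nat
  assumes "prob_space M"
    and "polish_subset \<Xi>"
    and "is_norm nrm"
    and "\<And>i. i \<ge> 1 \<Longrightarrow> \<xi> i \<in> borel_measurable M"
    and "\<And>i \<omega>. i \<ge> 1 \<Longrightarrow> \<omega> \<in> space M \<Longrightarrow> \<xi> i \<omega> \<in> \<Xi>"
    and "prob_space.indep_vars M (\<lambda>_. borel) \<xi> {1..}"
    and "\<And>t. t \<ge> 0 \<Longrightarrow> \<rho> t \<ge> 0"
    and "\<rho> 0 = 0"
    and "\<And>i k. i \<ge> 1 \<Longrightarrow>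
           wasserstein1 nrm (distr M borel (\<xi> i)) (distr M borel (\<xi> (i + k))) \<le> ennreal (\<rho> (real k))"
    and "finite \<X>"
    and "\<And>x. g x \<in> borel_measurable borel"
    and "0 < \<epsilon>" and "\<epsilon> \<le> 1"
    and "0 < \<delta>" and "\<delta> < 1"
    and "0 < \<alpha>" and "\<alpha> < \<epsilon>"
    and "0 < \<theta>" and "\<theta> < \<epsilon> - \<alpha>"
    and "N > 0"
    and "real N \<ge> 1 / (2 * (\<epsilon> - \<alpha> - \<theta>)\<^sup>2) * ln (real (card \<X>) / \<delta>)"
  shows "\<exists>A \<in> sets M. prob_space.prob M A \<ge> 1 - \<delta> \<and>
           A \<subseteq> {\<omega> \<in> space M.
             {x \<in> \<X>. (\<Sum>i = 1..N.
                  (if \<exists>u \<in> \<Xi>. nrm (u - \<xi> i \<omega>) \<le> \<rho> (real (N + 1 - i)) / \<theta> \<and> g x u > 0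
                   then 1 else 0)) / real N \<le> \<alpha>}
             \<subseteq> {x \<in> \<X>. prob_space.prob M {\<omega>'\<in>space M. g x (\<xi> (N + 1) \<omega>') > 0} \<le> \<epsilon>}}"
proof -
  interpret prob_space M by (rule assms(1))
  let ?accepted = "\<lambda>x. {\<omega>\<in>space M. (\<Sum>i = 1..N.
        (if \<exists>u \<in> \<Xi>. nrm (u - \<xi> i \<omega>) \<le> \<rho> (real (N + 1 - i)) / \<theta> \<and> g x u > 0
         then 1 else 0)) / real N \<le> \<alpha>}"
  define bad where "bad = {x\<in>\<X>. \<epsilon> < prob {\<omega>\<in>space M. g x (\<xi> (N + 1) \<omega>) > 0}}"
  have W: "wasserstein1 nrm (distr M borel (\<xi> i)) (distr M borel (\<xi> (N + 1)))
      \<le> ennreal (\<rho> (real (N + 1 - i)))" if "i \<in> {1..N}" for i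
    using assms(9)[of i "N + 1 - i"] that by simp
  have cover: "\<exists>E\<in>sets M. prob E \<le> exp (- 2 * real N * (\<epsilon> - \<alpha> - \<theta>)\<^sup>2) \<and> ?accepted x \<subseteq> E"
    if "x \<in> bad" for x
    using that W assms(4,5,7,18-20) indep_vars_subset[OF assms(6)]
    by (intro prob_robust_accept_le[OF assms(3) polish_subset_imp_borel[OF assms(2)] assms(11)])
      (auto simp: bad_def)
  have "finite bad" using assms(10) unfolding bad_def by simp
  from prob_cover_UN_le[where A = ?accepted, OF this cover]
  obtain E where E: "E \<in> sets M" "prob E \<le> card bad * exp (- 2 * real N * (\<epsilon> - \<alpha> - \<theta>)\<^sup>2)"
    and accepted: "(\<Union>x\<in>bad. ?accepted x) \<subseteq> E"
    by blast
  have "card bad \<le> card \<X>"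
    using assms(10) unfolding bad_def by (intro card_mono) auto
  note E(2)
  also have "card bad * exp (- 2 * real N * (\<epsilon> - \<alpha> - \<theta>)\<^sup>2)
      \<le> card \<X> * exp (- 2 * real N * (\<epsilon> - \<alpha> - \<theta>)\<^sup>2)"
    using \<open>card bad \<le> card \<X>\<close> by (intro mult_right_mono) auto
  also have "\<dots> \<le> \<delta>"
    using assms(14,19,21) by (intro mult_exp_le_of_ln_div_le) auto
  finally have "1 - \<delta> \<le> prob (space M - E)" using prob_compl[OF E(1)] by simp
  moreover have "space M - E \<subseteq> {\<omega> \<in> space M. {x \<in> \<X>. \<omega> \<in> ?accepted x}
      \<subseteq> {x \<in> \<X>. prob {\<omega>'\<in>space M. g x (\<xi> (N + 1) \<omega>') > 0} \<le> \<epsilon>}}"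
    using accepted unfolding bad_def by fastforce
  ultimately show ?thesis using E(1) by (intro bexI[of _ "space M - E"]) auto
qed

end
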